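(* For $v\in L^2(0,l)$, the function $m(\lambda)$ is an entire function of exponential type and for all $\lambda\in\mathbb C$ $$m(\lambda)+m^*(\lambda)=\widetilde v_d(\lambda)\widetilde v_c^*(\lambda)+\widetilde v_s(\lambda)\widetilde v_s^*(\lambda)+\widetilde v_c(\lambda)\widetilde v_d^*(\lambda).$$
   Context: Let $\zeta_1=1$, $\zeta_2=-\frac12+\frac{\sqrt3}{2}i$, $\zeta_3=-\frac12-\frac{\sqrt3}{2}i$; $c(z)=\frac13\sum_k e^{z\zeta_k}$, $s(z)=\frac13\sum_k\zeta_k^{-1}e^{z\zeta_k}$, $d(z)=\frac13\sum_k\zeta_k^{-2}e^{z\zeta_k}$. Fix $0<l<\infty$ and $v\in L^2(0,l)$. For an entire function $f$ let $f^*(\lambda)=\overline{f(\overline\lambda)}$. Define $\widetilde v_c(\lambda)=\int_0^l v(x)c(-i\lambda x)\,dx$, $\widetilde v_s(\lambda)=\int_0^l v(x)s(-i\lambda x)\,dx$, $\widetilde v_d(\lambda)=\int_0^l v(x)d(-i\lambda x)\,dx$ (so e.g. $\widetilde v_c^*(\lambda)=\int_0^l\overline{v(x)}c(i\lambda x)\,dx$), and $$m(\lambda)=\int_0^l\overline{v(x)}\int_0^x d(i\lambda(x-t))v(t)\,dt\,dx.$$ *)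

theory Defs
  imports "HOL-Analysis.Analysis"
begin

definition zeta :: "nat \<Rightarrow> complex" where
  "zeta k = (if k = 1 then 1
             else if k = 2 then Complex (-1/2) (sqrt 3 / 2)
             else Complex (-1/2) (- sqrt 3 / 2))"

definition cfun :: "complex \<Rightarrow> complex" where
  "cfun z = (1/3) * (\<Sum>k\<in>{1,2,3}. exp (z * zeta k))"

definition sfun :: "complex \<Rightarrow> complex" where
  "sfun z = (1/3) * (\<Sum>k\<in>{1,2,3}. inverse (zeta k) * exp (z * zeta k))"

definition dfun :: "complex \<Rightarrow> complex" where
  "dfun z = (1/3) * (\<Sum>k\<in>{1,2,3}. inverse (zeta k ^ 2) * exp (z * zeta k))"

definition fstar :: "(complex \<Rightarrow> complex) \<Rightarrow> complex \<Rightarrow> complex" where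
  "fstar f z = cnj (f (cnj z))"

definition L2_on :: "real \<Rightarrow> (real \<Rightarrow> complex) \<Rightarrow> bool" where
  "L2_on l v \<longleftrightarrow> set_borel_measurable lborel {0..l} v \<and>
                   set_integrable lborel {0..l} (\<lambda>x. (cmod (v x))\<^sup>2)"

definition vc :: "real \<Rightarrow> (real \<Rightarrow> complex) \<Rightarrow> complex \<Rightarrow> complex" where
  "vc l v z = (LINT x:{0..l}|lborel. v x * cfun (- \<i> * z * complex_of_real x))"

definition vs :: "real \<Rightarrow> (real \<Rightarrow> complex) \<Rightarrow> complex \<Rightarrow> complex" where
  "vs l v z = (LINT x:{0..l}|lborel. v x * sfun (- \<i> * z * complex_of_real x))"

definition vd :: "real \<Rightarrow> (real \<Rightarrow> complex) \<Rightarrow> complex \<Rightarrow> complex" where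
  "vd l v z = (LINT x:{0..l}|lborel. v x * dfun (- \<i> * z * complex_of_real x))"

definition mfun :: "real \<Rightarrow> (real \<Rightarrow> complex) \<Rightarrow> complex \<Rightarrow> complex" where
  "mfun l v z = (LINT x:{0..l}|lborel. cnj (v x) *
      (LINT t:{0..x}|lborel. dfun (\<i> * z * complex_of_real (x - t)) * v t))"

definition exponential_type :: "(complex \<Rightarrow> complex) \<Rightarrow> bool" where
  "exponential_type f \<longleftrightarrow> (\<exists>A B. \<forall>z. cmod (f z) \<le> A * exp (B * cmod z))"

end

(*
  m is the integral of the kernel K(x,t) = conj v(x) v(t) d(i z (x - t)) over the triangle
  0 <= t <= x <= l. Since conj (d w) = d (conj w), the reflection m^* is the integral of the
  same kernel over the reflected triangle, so m + m^* integrates K over the whole square,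
  the diagonal being a null set. The addition theorem d(a + b) = d a c b + s a s b + c a d b
  splits K into three products of a function of x and a function of t, and Fubini turns
  the square integral into the stated sum of products of transforms. Holomorphy and the
  exponential bound come from |d w| <= exp |w|, by differentiating under the integral sign.
*)

theory Submission
  imports Defs "HOL-Complex_Analysis.Complex_Analysis"
begin

definition \<omega> :: complex where "\<omega> = Complex (-1/2) (sqrt 3 / 2)"

lemma omega_squared: "\<omega>\<^sup>2 = Complex (-1/2) (- sqrt 3 / 2)"
  by (simp add: \<omega>_def power2_eq_square complex_eq_iff field_simps)

lemma omega_squared_add_omega_add_one: "\<omega>\<^sup>2 + \<omega> + 1 = 0"
  by (simp add: omega_squared) (simp add: \<omega>_def complex_eq_iff)

lemma omega_cubed: "\<omega> ^ 3 = 1"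
proof -
  have "\<omega> ^ 3 - 1 = (\<omega> - 1) * (\<omega>\<^sup>2 + \<omega> + 1)" by algebra
  thus ?thesis using omega_squared_add_omega_add_one by simp
qed

lemma omega_pow_4: "\<omega> ^ 4 = \<omega>"
  using omega_cubed by (simp add: power_Suc2 numeral_eq_Suc)

lemma inverse_omega: "inverse \<omega> = \<omega>\<^sup>2"
  by (rule inverse_unique) (metis omega_cubed power2_eq_square power3_eq_cube mult.assoc)

lemma inverse_omega_squared: "inverse (\<omega>\<^sup>2) = \<omega>"
  by (rule inverse_unique) (metis omega_cubed power2_eq_square power3_eq_cube mult.commute)

lemma cnj_omega: "cnj \<omega> = \<omega>\<^sup>2"
  unfolding omega_squared by (simp add: \<omega>_def complex_eq_iff)

lemma cnj_omega_squared: "cnj (\<omega>\<^sup>2) = \<omega>"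
  unfolding omega_squared by (simp add: \<omega>_def complex_eq_iff)

lemma norm_omega: "norm \<omega> = 1"
  by (simp add: \<omega>_def cmod_def power2_eq_square)

lemma zeta_eq: "zeta 1 = 1" "zeta 2 = \<omega>" "zeta 3 = \<omega>\<^sup>2"
  by (simp_all add: zeta_def omega_squared) (simp add: \<omega>_def)

lemma cfun_eq: "cfun z = (exp z + exp (z * \<omega>) + exp (z * \<omega>\<^sup>2)) / 3"
  using zeta_eq(1) by (simp add: cfun_def zeta_eq)

lemma sfun_eq: "sfun z = (exp z + \<omega>\<^sup>2 * exp (z * \<omega>) + \<omega> * exp (z * \<omega>\<^sup>2)) / 3"
  using zeta_eq(1) by (simp add: sfun_def zeta_eq inverse_omega inverse_omega_squared)

lemma dfun_eq: "dfun z = (exp z + \<omega> * exp (z * \<omega>) + \<omega>\<^sup>2 * exp (z * \<omega>\<^sup>2)) / 3"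
proof -
  have "inverse ((\<omega>\<^sup>2)\<^sup>2) = \<omega>\<^sup>2"
    using omega_pow_4 inverse_omega by (simp flip: power_mult)
  thus ?thesis using zeta_eq(1) by (simp add: dfun_def zeta_eq inverse_omega_squared)
qed

lemma dfun_add: "dfun (a + b) = dfun a * cfun b + sfun a * sfun b + cfun a * dfun b"
proof -
  have "(A1 * B1 + \<omega> * (A2 * B2) + \<omega>\<^sup>2 * (A3 * B3)) / 3
      = (A1 + \<omega> * A2 + \<omega>\<^sup>2 * A3) / 3 * ((B1 + B2 + B3) / 3)
      + (A1 + \<omega>\<^sup>2 * A2 + \<omega> * A3) / 3 * ((B1 + \<omega>\<^sup>2 * B2 + \<omega> * B3) / 3)
      + (A1 + A2 + A3) / 3 * ((B1 + \<omega> * B2 + \<omega>\<^sup>2 * B3) / 3)" for A1 A2 A3 B1 B2 B3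
    using omega_squared_add_omega_add_one by (simp add: field_simps) algebra
  moreover have "exp ((a + b) * w) = exp (a * w) * exp (b * w)" for w
    by (simp add: distrib_right exp_add)
  ultimately show ?thesis
    unfolding dfun_eq cfun_eq sfun_eq by (simp only: exp_add mult_1_right)
qed

lemma cnj_cfun: "cnj (cfun z) = cfun (cnj z)"
  by (simp add: cfun_eq cnj_omega cnj_omega_squared exp_cnj omega_pow_4)

lemma cnj_sfun: "cnj (sfun z) = sfun (cnj z)"
  by (simp add: sfun_eq cnj_omega cnj_omega_squared exp_cnj omega_pow_4 algebra_simps)

lemma cnj_dfun: "cnj (dfun z) = dfun (cnj z)"
  by (simp add: dfun_eq cnj_omega cnj_omega_squared exp_cnj omega_pow_4 algebra_simps)

lemma norm_exp_mult_unit_le: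
  fixes z w :: complex
  assumes "norm w = 1"
  shows "norm (exp (z * w)) \<le> exp (norm z)"
  using complex_Re_le_cmod[of "z * w"] assms by (simp add: norm_mult)

lemma norm_third_sum_le:
  fixes x y w :: complex
  assumes "norm x \<le> B" "norm y \<le> B" "norm w \<le> B"
  shows "norm ((x + y + w) / 3) \<le> B"
  using norm_triangle_le[of x y "norm x + norm y"] norm_triangle_le[of "x + y" w] assms
  by (simp add: norm_divide)

lemma norm_cfun_le: "norm (cfun z) \<le> exp (norm z)"
  unfolding cfun_eq
  by (intro norm_third_sum_le norm_exp norm_exp_mult_unit_le) (simp_all add: norm_power norm_omega)

lemma norm_sfun_le: "norm (sfun z) \<le> exp (norm z)"
  unfolding sfun_eq
  by (intro norm_third_sum_le)
    (simp_all add: norm_mult norm_power norm_omega norm_exp norm_exp_mult_unit_le del: norm_exp_eq_Re)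

lemma norm_dfun_le: "norm (dfun z) \<le> exp (norm z)"
  unfolding dfun_eq
  by (intro norm_third_sum_le)
    (simp_all add: norm_mult norm_power norm_omega norm_exp norm_exp_mult_unit_le del: norm_exp_eq_Re)

lemma cfun_measurable[measurable]: "cfun \<in> borel_measurable borel"
  unfolding cfun_eq by (intro borel_measurable_continuous_onI continuous_intros) auto

lemma sfun_measurable[measurable]: "sfun \<in> borel_measurable borel"
  unfolding sfun_eq by (intro borel_measurable_continuous_onI continuous_intros) auto

lemma dfun_measurable[measurable]: "dfun \<in> borel_measurable borel"
  unfolding dfun_eq by (intro borel_measurable_continuous_onI continuous_intros) auto

lemma cnj_measurable[measurable]: "cnj \<in> borel_measurable borel"
  by (intro borel_measurable_continuous_onI continuous_intros)

lemma
  assumes "f \<in> {cfun, sfun, dfun}"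
  shows cube_fun_measurable: "f \<in> borel_measurable borel"
    and norm_cube_fun_le: "norm (f w) \<le> exp (norm w)"
    and cnj_cube_fun: "cnj (f w) = f (cnj w)"
  using assms by (auto simp: norm_cfun_le norm_sfun_le norm_dfun_le cnj_cfun cnj_sfun cnj_dfun)

lemma (in pair_sigma_finite) integrable_pair_mult:
  fixes f g :: "_ \<Rightarrow> 'c::{real_normed_field, banach, second_countable_topology}"
  assumes f: "integrable M1 f" and g: "integrable M2 g"
  shows "integrable (M1 \<Otimes>\<^sub>M M2) (\<lambda>(x, y). f x * g y)"
proof (rule Fubini_integrable)
  show "(\<lambda>(x, y). f x * g y) \<in> borel_measurable (M1 \<Otimes>\<^sub>M M2)"
    using f g by measurable
  have "(\<lambda>x. \<integral>y. norm (case (x, y) of (x, y) \<Rightarrow> f x * g y) \<partial>M2) = (\<lambda>x. norm (f x) * (\<integral>y. norm (g y) \<partial>M2))"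
    by (simp add: norm_mult)
  then show "integrable M1 (\<lambda>x. \<integral>y. norm (case (x, y) of (x, y) \<Rightarrow> f x * g y) \<partial>M2)"
    using f by simp
  show "AE x in M1. integrable M2 (\<lambda>y. case (x, y) of (x, y) \<Rightarrow> f x * g y)"
    using g by simp
qed

lemma (in pair_sigma_finite) integral_pair_mult:
  fixes f g :: "_ \<Rightarrow> 'c::{real_normed_field, banach, second_countable_topology}"
  assumes "integrable M1 f" and "integrable M2 g"
  shows "(\<integral>(x, y). f x * g y \<partial>(M1 \<Otimes>\<^sub>M M2)) = integral\<^sup>L M1 f * integral\<^sup>L M2 g"
  using integral_fst'[OF integrable_pair_mult[OF assms]] by simp

lemma AE_pair_lborel_off_diagonal: "AE p in lborel \<Otimes>\<^sub>M lborel. fst p \<noteq> (snd p :: real)"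
proof (rule lborel_pair.AE_pair_measure)
  show "AE x in lborel. AE y in lborel. fst (x, y) \<noteq> snd (x, y)"
    by (rule AE_I2, rule eventually_mono[OF AE_lborel_singleton]) auto
qed measurable

lemma integral_lower_triangle_add_reflected:
  fixes F :: "real \<Rightarrow> real \<Rightarrow> 'a::{banach, second_countable_topology}"
  assumes F: "integrable (lborel \<Otimes>\<^sub>M lborel) (\<lambda>(x, t). F x t)"
  shows "(\<integral>(x, t). (if t \<le> x then F x t else 0) \<partial>(lborel \<Otimes>\<^sub>M lborel))
       + (\<integral>(x, t). (if t \<le> x then F t x else 0) \<partial>(lborel \<Otimes>\<^sub>M lborel))
       = (\<integral>(x, t). F x t \<partial>(lborel \<Otimes>\<^sub>M lborel))"
proof -
  have [measurable]: "(\<lambda>(x, t). F x t) \<in> borel_measurable (lborel \<Otimes>\<^sub>M lborel)"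
    using F by (rule borel_measurable_integrable)
  have integrable_restrict: "integrable (lborel \<Otimes>\<^sub>M lborel) (\<lambda>(x, t). if P x t then F x t else 0)"
    if [measurable]: "Measurable.pred (lborel \<Otimes>\<^sub>M lborel) (\<lambda>(x, t). P x t)" for P
    by (rule Bochner_Integration.integrable_bound[OF F]) (auto split: prod.split)
  have lower: "integrable (lborel \<Otimes>\<^sub>M lborel) (\<lambda>(x, t). if t \<le> x then F x t else 0)"
    and upper: "integrable (lborel \<Otimes>\<^sub>M lborel) (\<lambda>(x, t). if x \<le> t then F x t else 0)"
    by (rule integrable_restrict, measurable)+
  have "(\<integral>(x, t). (if t \<le> x then F t x else 0) \<partial>(lborel \<Otimes>\<^sub>M lborel))
      = (\<integral>(x, t). (if x \<le> t then F x t else 0) \<partial>(lborel \<Otimes>\<^sub>M lborel))"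
    using lborel_pair.integral_product_swap[of "\<lambda>(x, t). if x \<le> t then F x t else 0"] by simp
  also have "(\<integral>(x, t). (if t \<le> x then F x t else 0) \<partial>(lborel \<Otimes>\<^sub>M lborel)) + \<dots>
      = (\<integral>(x, t). (if t \<le> x then F x t else 0) + (if x \<le> t then F x t else 0) \<partial>(lborel \<Otimes>\<^sub>M lborel))"
    using Bochner_Integration.integral_add[OF lower upper] by (simp add: split_beta')
  also have "\<dots> = (\<integral>(x, t). F x t \<partial>(lborel \<Otimes>\<^sub>M lborel))"
    by (rule integral_cong_AE) (use AE_pair_lborel_off_diagonal in \<open>auto elim!: AE_mp\<close>)
  finally show ?thesis .
qed

lemma holomorphic_lipschitz_on_cball:
  assumes hol: "f holomorphic_on UNIV" and r: "0 < r"
    and bound: "\<And>x. x \<in> cball z0 (2 * r) \<Longrightarrow> norm (f x) \<le> B"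
    and z: "z \<in> cball z0 r"
  shows "norm (f z - f z0) \<le> B / r * norm (z - z0)"
proof (rule field_differentiable_bound[of "cball z0 r"])
  fix y assume y: "y \<in> cball z0 r"
  show "(f has_field_derivative deriv f y) (at y within cball z0 r)"
    using hol by (auto intro: holomorphic_derivI)
  have "norm ((deriv ^^ 1) f y) \<le> fact 1 * B / r ^ 1"
  proof (rule Cauchy_inequality)
    show "f holomorphic_on ball y r" "continuous_on (cball y r) f"
      using hol by (auto intro: holomorphic_on_subset holomorphic_on_imp_continuous_on)
    fix x assume "norm (y - x) = r"
    with y have "x \<in> cball z0 (2 * r)"
      using dist_triangle[of z0 x y] by (auto simp: dist_norm)
    then show "norm (f x) \<le> B" by (rule bound)
  qed (use r in auto)
  then show "norm (deriv f y) \<le> B / r" by simp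
qed (use z r in auto)

lemma has_field_derivative_parametric_integral:
  fixes f :: "complex \<Rightarrow> 'a \<Rightarrow> complex"
  assumes hol: "\<And>t. t \<in> space M \<Longrightarrow> (\<lambda>z. f z t) holomorphic_on UNIV"
    and meas: "\<And>z. f z \<in> borel_measurable M"
    and w: "integrable M w"
    and w_bound: "\<And>z t. z \<in> cball z0 2 \<Longrightarrow> t \<in> space M \<Longrightarrow> norm (f z t) \<le> w t"
  shows "((\<lambda>z. integral\<^sup>L M (f z)) has_field_derivative (\<integral>t. deriv (\<lambda>z. f z t) z0 \<partial>M)) (at z0)"
proof -
  define D where "D = (\<lambda>t. deriv (\<lambda>z. f z t) z0)"
  have integrable: "integrable M (f z)" if "z \<in> cball z0 2" for z
    by (rule Bochner_Integration.integrable_bound[OF w meas])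
      (auto intro!: AE_I2 w_bound[OF that] intro: order_trans[OF _ abs_ge_self])
  have lipschitz: "norm (f z t - f z0 t) \<le> w t * norm (z - z0)"
    if "t \<in> space M" "z \<in> cball z0 1" for t z
    using holomorphic_lipschitz_on_cball[of "\<lambda>z. f z t" 1 z0 "w t" z] hol w_bound that by auto
  have "((\<lambda>z. integral\<^sup>L M (f z)) has_field_derivative integral\<^sup>L M D) (at z0 within ball z0 1)"
    unfolding has_field_derivative_iff tendsto_at_iff_sequentially
  proof (intro allI impI)
    fix X assume X: "\<forall>i. X i \<in> ball z0 1 - {z0}" and "X \<longlonglongrightarrow> z0"
    define q where "q i t = (f (X i) t - f z0 t) / (X i - z0)" for i t
    have q_meas: "q i \<in> borel_measurable M" for i
      unfolding q_def using meas by measurable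
    have q_lim: "(\<lambda>i. q i t) \<longlonglongrightarrow> D t" if "t \<in> space M" for t
    proof -
      have "((\<lambda>y. (f y t - f z0 t) / (y - z0)) \<longlongrightarrow> D t) (at z0)"
        using holomorphic_derivI[OF hol[OF that], of z0] unfolding has_field_derivative_iff D_def
        by simp
      with X \<open>X \<longlonglongrightarrow> z0\<close> show ?thesis
        unfolding tendsto_at_iff_sequentially q_def comp_def by auto
    qed
    have q_bound: "AE t in M. norm (q i t) \<le> w t" for i
    proof (rule AE_I2)
      fix t assume "t \<in> space M"
      moreover have "X i \<in> cball z0 1" "X i \<noteq> z0" using X by (auto simp: less_imp_le)
      ultimately show "norm (q i t) \<le> w t"
        using lipschitz[of t "X i"] by (simp add: q_def norm_divide divide_le_eq)
    qed
    have "(integral\<^sup>L M (f (X i)) - integral\<^sup>L M (f z0)) / (X i - z0) = integral\<^sup>L M (q i)" for i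
    proof -
      have "dist z0 (X i) \<le> 2" using X[rule_format, of i] by simp
      then show ?thesis
        unfolding q_def using integrable[of "X i"] integrable[of z0] by simp
    qed
    moreover have "(\<lambda>i. integral\<^sup>L M (q i)) \<longlonglongrightarrow> integral\<^sup>L M D"
      by (rule integral_dominated_convergence[OF borel_measurable_LIMSEQ_metric[OF q_meas q_lim]
            q_meas w _ q_bound]) (auto intro: q_lim)
    ultimately show "((\<lambda>y. (integral\<^sup>L M (f y) - integral\<^sup>L M (f z0)) / (y - z0)) \<circ> X)
        \<longlonglongrightarrow> integral\<^sup>L M D"
      by (simp add: comp_def)
  qed
  then show ?thesis
    by (simp add: D_def at_within_open[of z0 "ball z0 1"])
qed

lemma holomorphic_on_parametric_integral:
  fixes f :: "complex \<Rightarrow> 'a \<Rightarrow> complex"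
  assumes hol: "\<And>t. t \<in> space M \<Longrightarrow> (\<lambda>z. f z t) holomorphic_on UNIV"
    and meas: "\<And>z. f z \<in> borel_measurable M"
    and dominated: "\<And>R. \<exists>w. integrable M w \<and>
                      (\<forall>z t. norm z \<le> R \<longrightarrow> t \<in> space M \<longrightarrow> norm (f z t) \<le> w t)"
  shows "(\<lambda>z. integral\<^sup>L M (f z)) holomorphic_on UNIV"
  unfolding holomorphic_on_def field_differentiable_def
proof
  fix z0 :: complex
  obtain w where "integrable M w"
    and w_bound: "\<And>z t. norm z \<le> norm z0 + 2 \<Longrightarrow> t \<in> space M \<Longrightarrow> norm (f z t) \<le> w t"
    using dominated[of "norm z0 + 2"] by blast
  moreover have "norm z \<le> norm z0 + 2" if "z \<in> cball z0 2" for z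
    using that norm_triangle_sub[of z z0] by (auto simp: dist_norm norm_minus_commute)
  ultimately have "((\<lambda>z. integral\<^sup>L M (f z)) has_field_derivative
      (\<integral>t. deriv (\<lambda>z. f z t) z0 \<partial>M)) (at z0)"
    by (intro has_field_derivative_parametric_integral[OF hol meas]) auto
  then show "\<exists>f'. ((\<lambda>z. integral\<^sup>L M (f z)) has_field_derivative f') (at z0 within UNIV)"
    by auto
qed

lemma L2_on_imp_set_integrable:
  assumes "L2_on l v"
  shows "set_integrable lborel {0..l} v"
  unfolding set_integrable_def
proof (rule Bochner_Integration.integrable_bound)
  have "integrable lborel (\<lambda>x. indicat_real {0..l} x)"
    by (simp add: integrable_indicator_iff emeasure_lborel_Icc_eq)
  moreover have "integrable lborel (\<lambda>x. indicator {0..l} x *\<^sub>R (cmod (v x))\<^sup>2)"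
    using assms unfolding L2_on_def set_integrable_def by simp
  ultimately show "integrable lborel (\<lambda>x. indicator {0..l} x * (1 + (cmod (v x))\<^sup>2))"
    by (simp add: distrib_left)
  show "(\<lambda>x. indicator {0..l} x *\<^sub>R v x) \<in> borel_measurable lborel"
    using assms unfolding L2_on_def set_borel_measurable_def by simp
  have "cmod (v x) \<le> 1 + (cmod (v x))\<^sup>2" for x
    using zero_le_power2[of "cmod (v x) - 1"]
    by (simp add: power2_diff) (use norm_ge_zero[of "v x"] in linarith)
  then show "AE x in lborel. norm (indicator {0..l} x *\<^sub>R v x)
      \<le> norm (indicator {0..l} x * (1 + (cmod (v x))\<^sup>2))"
    by (intro AE_I2) (simp add: indicator_def)
qed

locale L2_interval =
  fixes l :: real and v :: "real \<Rightarrow> complex"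
  assumes l_pos: "0 < l" and L2: "L2_on l v"
begin

(* v extended by zero, so that all integrals over [0, l] become integrals over the real line. *)
definition u :: "real \<Rightarrow> complex" where
  "u x = indicator {0..l} x *\<^sub>R v x"

definition mkernel :: "complex \<Rightarrow> real \<Rightarrow> real \<Rightarrow> complex" where
  "mkernel z x t = cnj (u x) * u t * dfun (\<i> * z * complex_of_real (x - t))"

definition transform :: "(complex \<Rightarrow> complex) \<Rightarrow> complex \<Rightarrow> complex" where
  "transform f z = (\<integral>t. u t * f (- \<i> * z * complex_of_real t) \<partial>lborel)"

lemma u_measurable[measurable]: "u \<in> borel_measurable lborel"
  using L2 unfolding L2_on_def set_borel_measurable_def u_def[abs_def] by simp

lemma u_eq_0: "x \<notin> {0..l} \<Longrightarrow> u x = 0"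
  by (simp add: u_def)

lemma integrable_u: "integrable lborel u"
  using L2_on_imp_set_integrable[OF L2] unfolding set_integrable_def u_def[abs_def] .

lemma integrable_dominated_by_u:
  fixes h :: "real \<Rightarrow> complex"
  assumes "h \<in> borel_measurable lborel" and "\<And>t. norm (h t) \<le> norm (u t) * C"
  shows "integrable lborel h"
proof (rule Bochner_Integration.integrable_bound)
  show "integrable lborel (\<lambda>t. norm (u t) * C)"
    using integrable_u by simp
qed (use assms in \<open>auto intro: order_trans[OF _ abs_ge_self]\<close>)

lemma integrable_norm_u_tensor_norm_u:
  "integrable (lborel \<Otimes>\<^sub>M lborel) (\<lambda>(x, t). norm (u x) * (norm (u t) * C))"
  using lborel_pair.integrable_pair_mult[of "\<lambda>x. norm (u x)" "\<lambda>t. norm (u t) * C"] integrable_u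
  by simp

lemma integrable_dominated_by_u_u:
  fixes H :: "real \<Rightarrow> real \<Rightarrow> complex"
  assumes "(\<lambda>(x, t). H x t) \<in> borel_measurable (lborel \<Otimes>\<^sub>M lborel)"
    and "\<And>x t. norm (H x t) \<le> norm (u x) * norm (u t) * C"
  shows "integrable (lborel \<Otimes>\<^sub>M lborel) (\<lambda>(x, t). H x t)"
  by (rule Bochner_Integration.integrable_bound[OF integrable_norm_u_tensor_norm_u])
    (use assms in \<open>auto simp: mult.assoc split: prod.split intro: order_trans[OF _ abs_ge_self]\<close>)

lemma norm_dfun_on_square_le:
  assumes "x \<in> {0..l}" "t \<in> {0..l}"
  shows "norm (dfun (\<i> * z * complex_of_real (x - t))) \<le> exp (l * norm z)"
proof -
  have "norm (\<i> * z * complex_of_real (x - t)) = norm z * \<bar>x - t\<bar>"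
    by (simp add: norm_mult del: of_real_diff)
  also have "\<dots> \<le> norm z * l"
    using assms by (intro mult_left_mono) auto
  finally have "norm (\<i> * z * complex_of_real (x - t)) \<le> l * norm z"
    by (simp add: mult.commute)
  then show ?thesis
    using norm_dfun_le order_trans by fastforce
qed

lemma norm_mkernel_le: "norm (mkernel z x t) \<le> norm (u x) * norm (u t) * exp (l * norm z)"
  using norm_dfun_on_square_le[of x t z]
  by (cases "x \<in> {0..l}"; cases "t \<in> {0..l}")
    (auto simp: mkernel_def u_eq_0 norm_mult intro!: mult_left_mono)

lemma mkernel_measurable[measurable]:
  "(\<lambda>(x, t). mkernel z x t) \<in> borel_measurable (lborel \<Otimes>\<^sub>M lborel)"
  unfolding mkernel_def by measurable

lemma integrable_mkernel_restrict:
  assumes [measurable]: "Measurable.pred (lborel \<Otimes>\<^sub>M lborel) (\<lambda>(x, t). P x t)"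
  shows "integrable (lborel \<Otimes>\<^sub>M lborel) (\<lambda>(x, t). if P x t then mkernel z x t else 0)"
  by (rule integrable_dominated_by_u_u[where C = "exp (l * norm z)"])
    (use norm_mkernel_le in \<open>measurable, auto\<close>)

lemma mfun_eq_lower_triangle_integral:
  "mfun l v z = (\<integral>(x, t). (if t \<le> x then mkernel z x t else 0) \<partial>(lborel \<Otimes>\<^sub>M lborel))"
proof -
  have "mfun l v z = (\<integral>x. (\<integral>t. (if t \<le> x then mkernel z x t else 0) \<partial>lborel) \<partial>lborel)"
    unfolding mfun_def set_lebesgue_integral_def
  proof (rule Bochner_Integration.integral_cong[OF refl])
    fix x :: real
    show "indicator {0..l} x *\<^sub>R (cnj (v x) * (\<integral>t. indicator {0..x} t *\<^sub>R
            (dfun (\<i> * z * complex_of_real (x - t)) * v t) \<partial>lborel))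
        = (\<integral>t. (if t \<le> x then mkernel z x t else 0) \<partial>lborel)"
    proof (cases "x \<in> {0..l}")
      case True
      then have "(\<lambda>t. if t \<le> x then mkernel z x t else 0)
          = (\<lambda>t. cnj (v x) * (indicator {0..x} t *\<^sub>R (dfun (\<i> * z * complex_of_real (x - t)) * v t)))"
        by (auto simp: mkernel_def u_def indicator_def fun_eq_iff)
      then have "(\<integral>t. (if t \<le> x then mkernel z x t else 0) \<partial>lborel) = cnj (v x) *
          (\<integral>t. indicator {0..x} t *\<^sub>R (dfun (\<i> * z * complex_of_real (x - t)) * v t) \<partial>lborel)"
        by (simp only: integral_mult_right_zero)
      with True show ?thesis by simp
    next
      case False
      then show ?thesis by (simp add: mkernel_def u_eq_0[OF False] cong: if_cong)
    qed
  qed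
  also have "\<dots> = (\<integral>(x, t). (if t \<le> x then mkernel z x t else 0) \<partial>(lborel \<Otimes>\<^sub>M lborel))"
    using lborel_pair.integral_fst'[OF integrable_mkernel_restrict[of "\<lambda>x t. t \<le> x"]] by simp
  finally show ?thesis .
qed

lemma cnj_mkernel: "cnj (mkernel (cnj z) x t) = mkernel z t x"
proof -
  have "cnj (\<i> * cnj z * complex_of_real (x - t)) = \<i> * z * complex_of_real (t - x)"
    by (simp add: algebra_simps)
  then show ?thesis
    unfolding mkernel_def by (simp add: cnj_dfun)
qed

lemma fstar_mfun_eq_reflected_integral:
  "fstar (mfun l v) z = (\<integral>(x, t). (if t \<le> x then mkernel z t x else 0) \<partial>(lborel \<Otimes>\<^sub>M lborel))"
  unfolding fstar_def mfun_eq_lower_triangle_integral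
  by (subst Bochner_Integration.integral_cnj[symmetric])
    (simp add: split_beta' cnj_mkernel if_distrib[of cnj] cong: if_cong del: Bochner_Integration.integral_cnj)

lemma mfun_add_fstar_mfun:
  "mfun l v z + fstar (mfun l v) z = (\<integral>(x, t). mkernel z x t \<partial>(lborel \<Otimes>\<^sub>M lborel))"
  unfolding mfun_eq_lower_triangle_integral fstar_mfun_eq_reflected_integral
  by (rule integral_lower_triangle_add_reflected, rule integrable_dominated_by_u_u)
    (use norm_mkernel_le in auto)

lemma set_integral_eq_transform:
  "(LINT t:{0..l}|lborel. v t * f (- \<i> * z * complex_of_real t)) = transform f z"
  unfolding set_lebesgue_integral_def transform_def u_def by simp

lemma
  assumes f: "f \<in> {cfun, sfun, dfun}" and c: "norm c = 1"
  shows integrable_u_mult_cube_fun: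
      "integrable lborel (\<lambda>t. u t * f (c * z * complex_of_real t))"
    and integrable_cnj_u_mult_cube_fun:
      "integrable lborel (\<lambda>t. cnj (u t) * f (c * z * complex_of_real t))"
proof -
  note cube_fun_measurable[OF f, measurable]
  have "norm (f (c * z * complex_of_real t)) \<le> exp (l * norm z)" if "t \<in> {0..l}" for t
  proof -
    have "norm (c * z * complex_of_real t) \<le> l * norm z"
      using c that mult_right_mono[of t l "norm z"] by (simp add: norm_mult mult.commute)
    then show ?thesis
      using norm_cube_fun_le[OF f] order_trans by fastforce
  qed
  then have bound: "norm (u t) * norm (f (c * z * complex_of_real t)) \<le> norm (u t) * exp (l * norm z)"
    for t by (cases "t \<in> {0..l}") (auto simp: u_eq_0 intro: mult_left_mono)
  show "integrable lborel (\<lambda>t. u t * f (c * z * complex_of_real t))"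
    "integrable lborel (\<lambda>t. cnj (u t) * f (c * z * complex_of_real t))"
    by (rule integrable_dominated_by_u[where C = "exp (l * norm z)"], measurable,
        simp add: norm_mult bound)+
qed

lemma fstar_transform:
  assumes "f \<in> {cfun, sfun, dfun}"
  shows "fstar (transform f) z = (\<integral>x. cnj (u x) * f (\<i> * z * complex_of_real x) \<partial>lborel)"
  unfolding fstar_def transform_def
  by (simp add: Bochner_Integration.integral_cnj[symmetric] cnj_cube_fun[OF assms]
      del: Bochner_Integration.integral_cnj)

lemma integral_pair_transform:
  assumes "f \<in> {cfun, sfun, dfun}" "g \<in> {cfun, sfun, dfun}"
  shows "(\<integral>(x, t). cnj (u x) * f (\<i> * z * complex_of_real x) * (u t * g (- \<i> * z * complex_of_real t))
           \<partial>(lborel \<Otimes>\<^sub>M lborel)) = fstar (transform f) z * transform g z"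
  using lborel_pair.integral_pair_mult[OF integrable_cnj_u_mult_cube_fun[OF assms(1), of \<i> z]
      integrable_u_mult_cube_fun[OF assms(2), of "- \<i>" z]]
  by (simp add: fstar_transform[OF assms(1)] transform_def)

lemma mkernel_separated:
  fixes z :: complex and x t :: real
  defines "a \<equiv> \<lambda>f. cnj (u x) * f (\<i> * z * complex_of_real x)"
    and "b \<equiv> \<lambda>g. u t * g (- \<i> * z * complex_of_real t)"
  shows "mkernel z x t = a dfun * b cfun + a sfun * b sfun + a cfun * b dfun"
proof -
  have "\<i> * z * complex_of_real (x - t) = \<i> * z * complex_of_real x + - \<i> * z * complex_of_real t"
    by (simp add: algebra_simps)
  then show ?thesis
    unfolding mkernel_def a_def b_def by (simp only: dfun_add) (simp add: algebra_simps)
qed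

lemma integral_mkernel:
  "(\<integral>(x, t). mkernel z x t \<partial>(lborel \<Otimes>\<^sub>M lborel))
     = fstar (transform dfun) z * transform cfun z + fstar (transform sfun) z * transform sfun z
       + fstar (transform cfun) z * transform dfun z"
proof -
  define p where "p f g x t = cnj (u x) * f (\<i> * z * complex_of_real x) * (u t * g (- \<i> * z * complex_of_real t))"
    for f g :: "complex \<Rightarrow> complex" and x t :: real
  have integrable: "integrable (lborel \<Otimes>\<^sub>M lborel) (\<lambda>(x, t). p f g x t)"
    if "f \<in> {cfun, sfun, dfun}" "g \<in> {cfun, sfun, dfun}" for f g
    using lborel_pair.integrable_pair_mult[OF integrable_cnj_u_mult_cube_fun[OF that(1), of \<i> z]
        integrable_u_mult_cube_fun[OF that(2), of "- \<i>" z]]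
    unfolding p_def by simp
  have "(\<integral>(x, t). mkernel z x t \<partial>(lborel \<Otimes>\<^sub>M lborel))
      = (\<integral>(x, t). p dfun cfun x t + p sfun sfun x t + p cfun dfun x t \<partial>(lborel \<Otimes>\<^sub>M lborel))"
    unfolding mkernel_separated p_def ..
  also have "\<dots> = (\<integral>(x, t). p dfun cfun x t \<partial>(lborel \<Otimes>\<^sub>M lborel))
      + (\<integral>(x, t). p sfun sfun x t \<partial>(lborel \<Otimes>\<^sub>M lborel))
      + (\<integral>(x, t). p cfun dfun x t \<partial>(lborel \<Otimes>\<^sub>M lborel))"
    using integrable[of dfun cfun] integrable[of sfun sfun] integrable[of cfun dfun]
    by (simp add: split_beta')
  finally show ?thesis
    unfolding p_def by (simp only: integral_pair_transform insert_iff simp_thms)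
qed

lemma mfun_holomorphic: "mfun l v holomorphic_on UNIV"
proof -
  have "(\<lambda>z. \<integral>(x, t). (if t \<le> x then mkernel z x t else 0) \<partial>(lborel \<Otimes>\<^sub>M lborel)) holomorphic_on UNIV"
  proof (rule holomorphic_on_parametric_integral)
    fix p :: "real \<times> real"
    show "(\<lambda>z. case p of (x, t) \<Rightarrow> if t \<le> x then mkernel z x t else 0) holomorphic_on UNIV"
      unfolding mkernel_def dfun_eq
      by (cases p, rename_tac x t, case_tac "t \<le> x") (auto intro!: holomorphic_intros)
  next
    fix R :: real
    have "norm (mkernel z x t) \<le> norm (u x) * (norm (u t) * exp (l * R))" if "norm z \<le> R" for z x t
      using norm_mkernel_le[of z x t] mult_left_mono[of "exp (l * norm z)" "exp (l * R)" "norm (u x) * norm (u t)"]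
        that l_pos by (simp add: mult.assoc)
    with integrable_norm_u_tensor_norm_u show "\<exists>w. integrable (lborel \<Otimes>\<^sub>M lborel) w \<and> (\<forall>z p. norm z \<le> R \<longrightarrow>
        p \<in> space (lborel \<Otimes>\<^sub>M lborel) \<longrightarrow>
        norm (case p of (x, t) \<Rightarrow> if t \<le> x then mkernel z x t else 0) \<le> w p)"
      by (intro exI[of _ "\<lambda>(x, t). norm (u x) * (norm (u t) * exp (l * R))"]) (auto split: prod.split)
  qed measurable
  moreover have "mfun l v = (\<lambda>z. \<integral>(x, t). (if t \<le> x then mkernel z x t else 0) \<partial>(lborel \<Otimes>\<^sub>M lborel))"
    by (intro ext mfun_eq_lower_triangle_integral)
  ultimately show ?thesis
    by simp
qed

lemma mfun_exponential_type: "exponential_type (mfun l v)"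
  unfolding exponential_type_def
proof (intro exI allI)
  fix z
  let ?V = "\<integral>x. norm (u x) \<partial>lborel"
  have "norm (mfun l v z)
      \<le> (\<integral>(x, t). norm (u x) * (norm (u t) * exp (l * norm z)) \<partial>(lborel \<Otimes>\<^sub>M lborel))"
    unfolding mfun_eq_lower_triangle_integral
  proof (rule Bochner_Integration.integral_norm_bound_integral)
    show "integrable (lborel \<Otimes>\<^sub>M lborel) (\<lambda>(x, t). if t \<le> x then mkernel z x t else 0)"
      by (rule integrable_mkernel_restrict) measurable
  qed (use integrable_norm_u_tensor_norm_u norm_mkernel_le in \<open>auto simp: mult.assoc split: prod.split\<close>)
  also have "\<dots> = ?V * ?V * exp (l * norm z)"
    using lborel_pair.integral_pair_mult[of "\<lambda>x. norm (u x)" "\<lambda>t. norm (u t) * exp (l * norm z)"]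
      integrable_u by simp
  finally show "norm (mfun l v z) \<le> ?V * ?V * exp (l * norm z)" .
qed

end

theorem lemma2p1:
  fixes l :: real and v :: "real \<Rightarrow> complex"
  assumes "0 < l" and "L2_on l v"
  shows "mfun l v holomorphic_on UNIV \<and> exponential_type (mfun l v) \<and>
         (\<forall>z. mfun l v z + fstar (mfun l v) z =
               vd l v z * fstar (vc l v) z + vs l v z * fstar (vs l v) z
               + vc l v z * fstar (vd l v) z)"
proof -
  interpret L2_interval l v
    using assms by unfold_locales
  have "vc l v = transform cfun" "vs l v = transform sfun" "vd l v = transform dfun"
    unfolding vc_def vs_def vd_def set_integral_eq_transform by simp_all
  then show ?thesis
    using mfun_holomorphic mfun_exponential_type mfun_add_fstar_mfun integral_mkernel
    by (simp add: mult.commute)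
qed

end
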